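(* Let $\mathcal{M}=(\mathcal{V}',\mathcal{E}')$ be a finite graph with shortest-path distance $d_{\mathcal{M}}$, and let $d,\ell\ge1$ be integers. Let $A_1,\dots,A_\ell\in\mathbb{R}^{|\mathcal{V}'|d\times|\mathcal{V}'|d}$ be block matrices with $d\times d$ blocks $(A_i)_{u,q}$ indexed by $u,q\in\mathcal{V}'$, and suppose there exist $C_i\ge0$ and $0\le\lambda<1$ such that $\|(A_i)_{u,q}\|\le C_i\lambda^{d_{\mathcal{M}}(u,q)}$ for all $u,q\in\mathcal{V}'$ and all $i$. Choose $\delta>0$ with $\lambda'=\lambda+\delta<1$, and suppose \[ \tilde a:=\sum_{k=0}^\infty\Big(\frac{\lambda}{\lambda'}\Big)^k\sup_{u\in\mathcal{V}'}|\partial N_u^k|<\infty. \] Then for all $u,v\in\mathcal{V}'$, \[ \Big\|\Big(\prod_{i=1}^\ell A_i\Big)_{u,v}\Big\|\le C'(\lambda')^{d_{\mathcal{M}}(u,v)},\qquad C'=\tilde a^{\,\ell}\prod_{i=1}^\ell C_i. \]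
   Context: $\|\cdot\|$ is the induced 2-norm on matrices. $N_u^k=\{q\in\mathcal{V}':d_{\mathcal{M}}(u,q)\le k\}$ and $\partial N_u^k=N_u^k\setminus N_u^{k-1}$ (with $N_u^{-1}=\emptyset$). *)

theory Defs
  imports "HOL-Analysis.Analysis" "HOL-Library.Extended_Nat"
begin

definition gdist :: "('v \<Rightarrow> 'v \<Rightarrow> bool) \<Rightarrow> 'v \<Rightarrow> 'v \<Rightarrow> enat" where
  "gdist E u v = (if \<exists>n. (E ^^ n) u v then enat (LEAST n. (E ^^ n) u v) else \<infinity>)"

text \<open>lambda to the power of an extended natural; lambda^infinity = 0 (limit for 0 <= lambda < 1).\<close>
definition epow :: "real \<Rightarrow> enat \<Rightarrow> real" where
  "epow x k = (case k of enat n \<Rightarrow> x ^ n | \<infinity> \<Rightarrow> 0)"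

definition gball :: "('v \<Rightarrow> 'v \<Rightarrow> bool) \<Rightarrow> 'v \<Rightarrow> nat \<Rightarrow> 'v set" where
  "gball E u k = {q. gdist E u q \<le> enat k}"

text \<open>boundary of N_u^k, with N_u^{-1} empty\<close>
definition gsphere :: "('v \<Rightarrow> 'v \<Rightarrow> bool) \<Rightarrow> 'v \<Rightarrow> nat \<Rightarrow> 'v set" where
  "gsphere E u k = gball E u k - (if k = 0 then {} else gball E u (k - 1))"

definition blk :: "real ^ ('v::finite \<times> 'd::finite) ^ ('v \<times> 'd) \<Rightarrow> 'v \<Rightarrow> 'v \<Rightarrow> real ^ 'd ^ 'd" where
  "blk A u q = (\<chi> i j. A $ (u, i) $ (q, j))"

definition mnorm2 :: "real ^ 'd ^ 'd \<Rightarrow> real" where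
  "mnorm2 B = onorm (\<lambda>x. B *v x)"

end

theory Submission imports Defs begin

text \<open>The block of a product is a sum over intermediate vertices q. For one factor with decay
  rate \<open>lam\<close> and one with rate \<open>lam' = lam + \<delta>\<close>, submultiplicativity of the norm and the
  triangle inequality for the graph distance bound the q-th term by
  \<open>(lam/lam')^d(u,q) * lam'^d(u,v)\<close>; grouping the q by their distance from u shows that the
  sum of \<open>(lam/lam')^d(u,q)\<close> is at most \<open>\<tilde>a\<close>. So the product again decays at rate \<open>lam'\<close>,
  with the constant multiplied by \<open>\<tilde>a\<close>, and the theorem follows by induction on the number
  of factors.\<close>

lemma mnorm2_nonneg: "0 \<le> mnorm2 B"
  unfolding mnorm2_def by (rule onorm_pos_le) simp

lemma mnorm2_zero [simp]: "mnorm2 0 = 0"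
proof -
  have zero_map: "(\<lambda>x. (0::real^'a^'b) *v x) = (\<lambda>x. 0)" by simp
  show ?thesis unfolding mnorm2_def zero_map by (rule onorm_zero)
qed

lemma mnorm2_mat_1_le: "mnorm2 (mat 1) \<le> 1"
proof -
  have "(\<lambda>x. (mat 1::real^'a^'a) *v x) = (\<lambda>x. x)" by simp
  then show ?thesis unfolding mnorm2_def by (metis onorm_id_le)
qed

lemma mnorm2_add_le: "mnorm2 (X + Y) \<le> mnorm2 X + mnorm2 Y"
proof -
  have "(\<lambda>x. (X + Y) *v x) = (\<lambda>x. X *v x + Y *v x)"
    by (simp add: matrix_vector_mult_add_rdistrib)
  then show ?thesis unfolding mnorm2_def
    using onorm_triangle[of "\<lambda>x. X *v x" "\<lambda>x. Y *v x"] by simp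
qed

lemma mnorm2_sum_le: "finite S \<Longrightarrow> mnorm2 (\<Sum>q\<in>S. f q) \<le> (\<Sum>q\<in>S. mnorm2 (f q))"
  by (induction S rule: finite_induct) (auto intro: order_trans[OF mnorm2_add_le])

lemma mnorm2_matrix_mult_le: "mnorm2 (X ** Y) \<le> mnorm2 X * mnorm2 Y"
proof -
  have "(\<lambda>x. (X ** Y) *v x) = (\<lambda>x. X *v x) \<circ> (\<lambda>x. Y *v x)"
    by (auto simp: matrix_vector_mul_assoc)
  then show ?thesis unfolding mnorm2_def
    by (metis onorm_compose matrix_vector_mul_bounded_linear)
qed

lemma blk_matrix_mult: "blk (A ** B) u v = (\<Sum>q\<in>UNIV. blk A u q ** blk B q v)"
proof -
  have "(A ** B) $ (u,i) $ (v,j) = (\<Sum>q\<in>UNIV. \<Sum>k\<in>UNIV. A $ (u,i) $ (q,k) * B $ (q,k) $ (v,j))"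
    for i j
    unfolding matrix_matrix_mult_def
    by (simp add: sum.cartesian_product UNIV_Times_UNIV[symmetric] del: UNIV_Times_UNIV)
  then show ?thesis
    by (simp add: vec_eq_iff blk_def matrix_matrix_mult_def)
qed

lemma blk_mat_1: "blk (mat 1) u v = (if u = v then mat 1 else 0)"
  by (auto simp: blk_def vec_eq_iff mat_def)

lemma gdist_self [simp]: "gdist E u u = 0"
proof -
  have "(E ^^ 0) u u" by simp
  then have "\<exists>n. (E ^^ n) u u" and "(LEAST n. (E ^^ n) u u) = 0"
    by (blast, rule Least_eq_0)
  then show ?thesis unfolding gdist_def by (simp add: enat_0)
qed

lemma gdist_triangle: "gdist E u v \<le> gdist E u q + gdist E q v"
proof (cases "gdist E u q = \<infinity> \<or> gdist E q v = \<infinity>")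
  case True
  then show ?thesis by auto
next
  case False
  then have ex1: "\<exists>n. (E ^^ n) u q" and ex2: "\<exists>n. (E ^^ n) q v"
    by (auto simp: gdist_def split: if_splits)
  define m where "m = (LEAST n. (E ^^ n) u q)"
  define n where "n = (LEAST k. (E ^^ k) q v)"
  have "(E ^^ m) u q" unfolding m_def by (rule LeastI_ex[OF ex1])
  moreover have "(E ^^ n) q v" unfolding n_def by (rule LeastI_ex[OF ex2])
  ultimately have path: "(E ^^ (m + n)) u v" by (auto simp: relpowp_add)
  then have "(LEAST k. (E ^^ k) u v) \<le> m + n" by (rule Least_le)
  then show ?thesis
    using path ex1 ex2 unfolding gdist_def m_def n_def by auto
qed

lemma gsphere_eq: "gsphere E u k = {q. gdist E u q = enat k}"
proof (cases k)
  case 0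
  then show ?thesis by (auto simp: gsphere_def gball_def zero_enat_def[symmetric])
next
  case (Suc j)
  have "(x \<le> enat (Suc j) \<and> \<not> x \<le> enat j) = (x = enat (Suc j))" for x
    by (cases x) auto
  then show ?thesis using Suc by (auto simp: gsphere_def gball_def)
qed

lemma epow_0 [simp]: "epow x 0 = 1"
  by (simp add: epow_def zero_enat_def)

lemma epow_nonneg: "0 \<le> x \<Longrightarrow> 0 \<le> epow x d"
  by (cases d) (auto simp: epow_def)

lemma epow_antimono: "0 \<le> x \<Longrightarrow> x \<le> 1 \<Longrightarrow> a \<le> b \<Longrightarrow> epow x b \<le> epow x a"
  by (cases a; cases b) (auto simp: epow_def power_decreasing)

lemma epow_add: "epow x (a + b) = epow x a * epow x b"
  by (cases a; cases b) (auto simp: epow_def power_add)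

lemma epow_mult: "epow (x * y) d = epow x d * epow y d"
  by (cases d) (auto simp: epow_def power_mult_distrib)

lemma sum_epow_gdist_le_suminf:
  fixes E :: "'v::finite \<Rightarrow> 'v \<Rightarrow> bool"
  assumes r: "0 \<le> r"
    and summable: "summable (\<lambda>k. r ^ k * real (Max (range (\<lambda>u. card (gsphere E u k)))))"
  shows "(\<Sum>q\<in>UNIV. epow r (gdist E u q))
     \<le> (\<Sum>k. r ^ k * real (Max (range (\<lambda>u. card (gsphere E u k)))))"
proof -
  define S where "S = {q. gdist E u q \<noteq> \<infinity>}"
  define g where "g = (\<lambda>q. the_enat (gdist E u q))"
  have level_set: "{q\<in>S. g q = k} = gsphere E u k" for k
    by (auto simp: gsphere_eq S_def g_def)
  have "(\<Sum>q\<in>UNIV. epow r (gdist E u q)) = (\<Sum>q\<in>S. r ^ g q)"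
    by (rule sum.mono_neutral_cong_right) (auto simp: S_def g_def epow_def)
  also have "\<dots> = (\<Sum>k\<in>g ` S. \<Sum>q\<in>{q\<in>S. g q = k}. r ^ g q)"
    by (rule sum.group[symmetric]) simp_all
  also have "\<dots> = (\<Sum>k\<in>g ` S. r ^ k * real (card (gsphere E u k)))"
    by (rule sum.cong) (simp_all add: level_set[symmetric])
  also have "\<dots> \<le> (\<Sum>k\<in>g ` S. r ^ k * real (Max (range (\<lambda>u. card (gsphere E u k)))))"
    by (intro sum_mono mult_left_mono of_nat_mono Max_ge) (simp_all add: r)
  also have "\<dots> \<le> (\<Sum>k. r ^ k * real (Max (range (\<lambda>u. card (gsphere E u k)))))"
    by (rule sum_le_suminf[OF summable]) (simp_all add: r)
  finally show ?thesis .
qed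

definition block_decay ::
    "('v \<Rightarrow> 'v \<Rightarrow> bool) \<Rightarrow> real \<Rightarrow> real \<Rightarrow> real ^ ('v::finite \<times> 'd::finite) ^ ('v \<times> 'd) \<Rightarrow> bool"
  where "block_decay E C lam A \<longleftrightarrow> (\<forall>u q. mnorm2 (blk A u q) \<le> C * epow lam (gdist E u q))"

lemma block_decay_mat_1: "0 \<le> lam \<Longrightarrow> block_decay E 1 lam (mat 1)"
  by (simp add: block_decay_def blk_mat_1 mnorm2_mat_1_le epow_nonneg)

lemma block_decay_matrix_mult:
  assumes A: "block_decay E C (r * lam') A" and B: "block_decay E K lam' B"
    and nonneg: "0 \<le> C" "0 \<le> K" "0 \<le> r" "0 \<le> lam'" and "lam' \<le> 1"
    and sphere_sum: "\<And>u. (\<Sum>q\<in>UNIV. epow r (gdist E u q)) \<le> a"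
  shows "block_decay E (a * C * K) lam' (A ** B)"
  unfolding block_decay_def
proof (intro allI)
  fix u v
  have "mnorm2 (blk (A ** B) u v) \<le> (\<Sum>q\<in>UNIV. mnorm2 (blk A u q ** blk B q v))"
    unfolding blk_matrix_mult by (simp add: mnorm2_sum_le)
  also have "\<dots> \<le> (\<Sum>q\<in>UNIV. C * epow (r * lam') (gdist E u q) * (K * epow lam' (gdist E q v)))"
  proof (rule sum_mono)
    fix q
    have "mnorm2 (blk A u q ** blk B q v) \<le> mnorm2 (blk A u q) * mnorm2 (blk B q v)"
      by (rule mnorm2_matrix_mult_le)
    also have "\<dots> \<le> C * epow (r * lam') (gdist E u q) * (K * epow lam' (gdist E q v))"
      using A B nonneg unfolding block_decay_def
      by (intro mult_mono) (simp_all add: mnorm2_nonneg epow_nonneg)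
    finally show "mnorm2 (blk A u q ** blk B q v)
        \<le> C * epow (r * lam') (gdist E u q) * (K * epow lam' (gdist E q v))" .
  qed
  also have "\<dots> \<le> (\<Sum>q\<in>UNIV. C * K * epow lam' (gdist E u v) * epow r (gdist E u q))"
  proof (rule sum_mono)
    fix q
    have "epow lam' (gdist E u q) * epow lam' (gdist E q v) \<le> epow lam' (gdist E u v)"
      unfolding epow_add[symmetric] using nonneg \<open>lam' \<le> 1\<close>
      by (intro epow_antimono gdist_triangle)
    then have "C * K * (epow r (gdist E u q) * (epow lam' (gdist E u q) * epow lam' (gdist E q v)))
        \<le> C * K * (epow r (gdist E u q) * epow lam' (gdist E u v))"
      using nonneg by (intro mult_left_mono) (simp_all add: epow_nonneg)
    then show "C * epow (r * lam') (gdist E u q) * (K * epow lam' (gdist E q v))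
        \<le> C * K * epow lam' (gdist E u v) * epow r (gdist E u q)"
      unfolding epow_mult by (simp add: ac_simps)
  qed
  also have "\<dots> = C * K * epow lam' (gdist E u v) * (\<Sum>q\<in>UNIV. epow r (gdist E u q))"
    by (simp add: sum_distrib_left)
  also have "\<dots> \<le> C * K * epow lam' (gdist E u v) * a"
    using nonneg by (intro mult_left_mono sphere_sum) (simp add: epow_nonneg)
  finally show "mnorm2 (blk (A ** B) u v) \<le> a * C * K * epow lam' (gdist E u v)"
    by (simp add: ac_simps)
qed

lemma block_decay_foldr_matrix_mult:
  assumes decay: "\<forall>i\<in>set xs. block_decay E (C i) (r * lam') (A i)"
    and C: "\<forall>i\<in>set xs. 0 \<le> C i" and "0 \<le> r" "0 \<le> lam'" "lam' \<le> 1"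
    and sphere_sum: "\<And>u. (\<Sum>q\<in>UNIV. epow r (gdist E u q)) \<le> a"
  shows "block_decay E (a ^ length xs * prod_list (map C xs)) lam' (foldr (\<lambda>i M. A i ** M) xs (mat 1))"
  using decay C
proof (induction xs)
  case Nil
  then show ?case using \<open>0 \<le> lam'\<close> by (simp add: block_decay_mat_1)
next
  case (Cons i xs)
  have "0 \<le> a"
    using sphere_sum \<open>0 \<le> r\<close> by (meson order_trans sum_nonneg epow_nonneg)
  moreover have "0 \<le> prod_list (map C xs)"
    using Cons.prems(2) by (induction xs) auto
  ultimately have "block_decay E (a * C i * (a ^ length xs * prod_list (map C xs))) lam'
      (A i ** foldr (\<lambda>i M. A i ** M) xs (mat 1))"
    using Cons assms(3-5) by (intro block_decay_matrix_mult[OF _ _ _ _ _ _ _ sphere_sum]) simp_all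
  then show ?case by (simp add: ac_simps)
qed

theorem lemmaC3:
  fixes E :: "'v::finite \<Rightarrow> 'v \<Rightarrow> bool"
    and A :: "nat \<Rightarrow> real ^ ('v \<times> 'd::finite) ^ ('v \<times> 'd)"
    and C :: "nat \<Rightarrow> real"
    and L :: nat and lam \<delta> :: real
  assumes sym: "symp E"
    and l1: "L \<ge> 1"
    and Cnn: "\<forall>i\<in>{1..L}. C i \<ge> 0"
    and lam: "0 \<le> lam" "lam < 1"
    and decay: "\<forall>i\<in>{1..L}. \<forall>u q. mnorm2 (blk (A i) u q) \<le> C i * epow lam (gdist E u q)"
    and del: "\<delta> > 0" "lam + \<delta> < 1"
    and fin: "summable (\<lambda>k. (lam / (lam + \<delta>)) ^ k * real (Max (range (\<lambda>u. card (gsphere E u k)))))"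
  shows "\<forall>u v. mnorm2 (blk (foldr (\<lambda>i M. A i ** M) [1..<L+1] (mat 1)) u v)
           \<le> ((\<Sum>k. (lam / (lam + \<delta>)) ^ k * real (Max (range (\<lambda>u. card (gsphere E u k))))) ^ L
               * (\<Prod>i=1..L. C i)) * epow (lam + \<delta>) (gdist E u v)"
proof -
  define r where "r = lam / (lam + \<delta>)"
  define a where "a = (\<Sum>k. r ^ k * real (Max (range (\<lambda>u. card (gsphere E u k)))))"
  have "0 \<le> r" and lam_eq: "lam = r * (lam + \<delta>)"
    using lam del by (simp_all add: r_def)
  have factors: "set [1..<L+1] = {1..L}" by auto
  have "\<forall>i\<in>set [1..<L+1]. block_decay E (C i) (r * (lam + \<delta>)) (A i)"
    using decay unfolding factors block_decay_def lam_eq[symmetric] by blast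
  moreover have "(\<Sum>q\<in>UNIV. epow r (gdist E u q)) \<le> a" for u
    using sum_epow_gdist_le_suminf \<open>0 \<le> r\<close> fin by (simp add: r_def a_def)
  ultimately have "block_decay E (a ^ length [1..<L+1] * prod_list (map C [1..<L+1])) (lam + \<delta>)
      (foldr (\<lambda>i M. A i ** M) [1..<L+1] (mat 1))"
    using Cnn \<open>0 \<le> r\<close> lam del unfolding factors
    by (intro block_decay_foldr_matrix_mult) auto
  moreover have "prod_list (map C [1..<L+1]) = (\<Prod>i=1..L. C i)"
    by (metis factors prod.distinct_set_conv_list distinct_upt)
  ultimately show ?thesis
    by (simp only: block_decay_def length_upt a_def r_def) simp
qed

end
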